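(* For every real constant $c>0$, the function $$L_c(\alpha,\mathbf p)\;=\;-c\,\log \sum_{\mathbf x\models\alpha}\ \prod_{i:\,\mathbf x\models X_i}\mathbf p_i\prod_{i:\,\mathbf x\models\neg X_i}(1-\mathbf p_i)$$ (where the sum ranges over all states $\mathbf x\in\{0,1\}^V$ satisfying $\alpha$, $V$ being the index set of $\mathbf p$) satisfies all of the axioms (A1)–(A8) listed in the context. Conversely, every function $L$ satisfying all of the axioms (A1)–(A8) is equal to $L_c$ for some constant $c>0$. In other words, the semantic loss is the unique function satisfying (A1)–(A8), up to a positive multiplicative constant.
   Context: Setting: For a finite set $V$ of Boolean variables, a sentence over $V$ is a propositional formula built from variables in $V$ with the usual connectives; $\mathit{true}$ denotes the constant true sentence. A state $\mathbf x$ is an assignment in $\{0,1\}^V$; it is identified both with the sentence that is the conjunction of the literals it makes true, and with the vector $\mathbf x\in\{0,1\}^V\subseteq[0,1]^V$. We write $\mathbf x\models\alpha$ if $\mathbf x$ satisfies $\alpha$, $\alpha\models\beta$ if every state satisfying $\alpha$ satisfies $\beta$, and $\alpha\equiv\beta$ if both $\alpha\models\beta$ and $\beta\models\alpha$. A loss function $L$ assigns to every finite variable set $V$, every vector $\mathbf p\in[0,1]^V$ (where $\mathbf p_i$ is the probability of variable $X_i$) and every sentence $\alpha$ whose variables lie in $V$ a value $L(\alpha,\mathbf p)\in\mathbb R\cup\{+\infty\}$. Logarithms are natural, with $-\log 0=+\infty$ and $K^{-\infty}=0$. If $\mathbf p\in[0,1]^X$ and $\mathbf q\in[0,1]^Y$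 with $X,Y$ disjoint, $[\mathbf p\,\mathbf q]\in[0,1]^{X\cup Y}$ is their concatenation. Axioms: (A1) Truth: $L(\mathit{true},\mathbf p)=0$ for all $\mathbf p$. (A2) Additive independence: if $\alpha$ is a sentence over $X$, $\beta$ a sentence over $Y$ with $X\cap Y=\emptyset$, $\mathbf p\in[0,1]^X$, $\mathbf q\in[0,1]^Y$, then $L(\alpha\wedge\beta,[\mathbf p\,\mathbf q])=L(\alpha,\mathbf p)+L(\beta,\mathbf q)$. (A3) Monotonicity: if $\alpha\models\beta$ then $L(\alpha,\mathbf p)\ge L(\beta,\mathbf p)$ for all $\mathbf p$. (A4) Identity: for every state $\mathbf x$, $L(\mathbf x,\mathbf x)=0$ (sentence vs. deterministic vector). (A5) Label-literal correspondence: for each variable $X$ there are real constants $K,K'$ such that for every $p\in[0,1]$ (a vector over $\{X\}$), $L(X,p)=-K\log p$ and $L(\neg X,p)=-K'\log(1-p)$. (A6) Value symmetry: $L(\alpha,\mathbf p)=L(\bar\alpha,\mathbf 1-\mathbf p)$, where $\bar\alpha$ replaces every variable in $\alpha$ by its negation and $\mathbf 1-\mathbf p$ is taken componentwise. (A7) Variable symmetry: for a permutation $\pi$ of the variable set $V$ of $\mathbf p$, $L(\alpha,\mathbf p)=L(\pi(\alpha),\pi(\mathbf p))$, where $\pi(\alpha)$ renames each variable $X$ to $\pi(X)$ and $\pi(\mathbf p)$ is the correspondingly permuted vector. (A8) Exponential additivity: there is a constant $K>0$ such that for all $\mathbf p$ and all sentences $\alpha,\beta$ with $\alpha\wedge\beta$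 unsatisfiable, $K^{-L(\alpha\vee\beta,\mathbf p)}=K^{-L(\alpha,\mathbf p)}+K^{-L(\beta,\mathbf p)}$. *)

theory Defs
  imports Complex_Main "HOL-Library.FuncSet" "HOL-Library.Extended_Real"
          "HOL-Combinatorics.Permutations"
begin

datatype 'v form = Var 'v | TT | FF | Neg "'v form" | Conj "'v form" "'v form"
  | Disj "'v form" "'v form" | Imp "'v form" "'v form"

fun eval :: "('v \<Rightarrow> bool) \<Rightarrow> 'v form \<Rightarrow> bool" where
  "eval s (Var v) = s v"
| "eval s TT = True"
| "eval s FF = False"
| "eval s (Neg a) = (\<not> eval s a)"
| "eval s (Conj a b) = (eval s a \<and> eval s b)"
| "eval s (Disj a b) = (eval s a \<or> eval s b)"
| "eval s (Imp a b) = (eval s a \<longrightarrow> eval s b)"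

definition entails :: "'v form \<Rightarrow> 'v form \<Rightarrow> bool" where
  "entails a b \<longleftrightarrow> (\<forall>s. eval s a \<longrightarrow> eval s b)"

definition satisfiable :: "'v form \<Rightarrow> bool" where
  "satisfiable a \<longleftrightarrow> (\<exists>s. eval s a)"

fun negvars :: "'v form \<Rightarrow> 'v form" where
  "negvars (Var v) = Neg (Var v)"
| "negvars TT = TT"
| "negvars FF = FF"
| "negvars (Neg a) = Neg (negvars a)"
| "negvars (Conj a b) = Conj (negvars a) (negvars b)"
| "negvars (Disj a b) = Disj (negvars a) (negvars b)"
| "negvars (Imp a b) = Imp (negvars a) (negvars b)"

text \<open>A state over V is represented by the set S \<subseteq> V of variables it makes true.
  As a sentence it is the conjunction of the literals it makes true.\<close>
definition lit :: "'v set \<Rightarrow> 'v \<Rightarrow> 'v form" where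
  "lit S v = (if v \<in> S then Var v else Neg (Var v))"

definition state_form :: "'v set \<Rightarrow> 'v set \<Rightarrow> 'v form" where
  "state_form V S = foldr Conj (map (lit S) (SOME xs. set xs = V \<and> distinct xs)) TT"

definition state_vec :: "'v set \<Rightarrow> 'v set \<Rightarrow> 'v \<Rightarrow> real" where
  "state_vec V S = restrict (\<lambda>i. if i \<in> S then 1 else 0) V"

definition pvecs :: "'v set \<Rightarrow> ('v \<Rightarrow> real) set" where
  "pvecs V = V \<rightarrow>\<^sub>E {0..1}"

definition concat_vec :: "'v set \<Rightarrow> ('v \<Rightarrow> real) \<Rightarrow> ('v \<Rightarrow> real) \<Rightarrow> 'v \<Rightarrow> real" where
  "concat_vec X p q = (\<lambda>i. if i \<in> X then p i else q i)"

definition one_minus :: "'v set \<Rightarrow> ('v \<Rightarrow> real) \<Rightarrow> 'v \<Rightarrow> real" where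
  "one_minus V p = restrict (\<lambda>i. 1 - p i) V"

definition single_vec :: "'v \<Rightarrow> real \<Rightarrow> 'v \<Rightarrow> real" where
  "single_vec v x = restrict (\<lambda>_. x) {v}"

definition valid :: "'v set \<Rightarrow> ('v \<Rightarrow> real) \<Rightarrow> 'v form \<Rightarrow> bool" where
  "valid V p a \<longleftrightarrow> finite V \<and> p \<in> pvecs V \<and> set_form a \<subseteq> V"

definition neglog :: "real \<Rightarrow> ereal" where
  "neglog x = (if x = 0 then \<infinity> else ereal (- ln x))"

definition expo :: "real \<Rightarrow> ereal \<Rightarrow> real" where
  "expo K l = (if l = \<infinity> then 0 else K powr (- real_of_ereal l))"

type_synonym 'v lossfun = "'v set \<Rightarrow> ('v \<Rightarrow> real) \<Rightarrow> 'v form \<Rightarrow> ereal"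

definition is_loss :: "'v lossfun \<Rightarrow> bool" where
  "is_loss L \<longleftrightarrow> (\<forall>V p a. valid V p a \<longrightarrow> L V p a \<noteq> -\<infinity>)"

definition A1 :: "'v lossfun \<Rightarrow> bool" where
  "A1 L \<longleftrightarrow> (\<forall>V p. finite V \<and> p \<in> pvecs V \<longrightarrow> L V p TT = 0)"

definition A2 :: "'v lossfun \<Rightarrow> bool" where
  "A2 L \<longleftrightarrow> (\<forall>X Y p q a b. valid X p a \<and> valid Y q b \<and> X \<inter> Y = {} \<longrightarrow>
      L (X \<union> Y) (concat_vec X p q) (Conj a b) = L X p a + L Y q b)"

definition A3 :: "'v lossfun \<Rightarrow> bool" where
  "A3 L \<longleftrightarrow> (\<forall>V p a b. valid V p a \<and> valid V p b \<and> entails a b \<longrightarrow> L V p a \<ge> L V p b)"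

definition A4 :: "'v lossfun \<Rightarrow> bool" where
  "A4 L \<longleftrightarrow> (\<forall>V S. finite V \<and> S \<subseteq> V \<longrightarrow> L V (state_vec V S) (state_form V S) = 0)"

definition A5 :: "'v lossfun \<Rightarrow> bool" where
  "A5 L \<longleftrightarrow> (\<forall>v. \<exists>K K' :: real. \<forall>x \<in> {0..1}.
      L {v} (single_vec v x) (Var v) = ereal K * neglog x \<and>
      L {v} (single_vec v x) (Neg (Var v)) = ereal K' * neglog (1 - x))"

definition A6 :: "'v lossfun \<Rightarrow> bool" where
  "A6 L \<longleftrightarrow> (\<forall>V p a. valid V p a \<longrightarrow> L V p a = L V (one_minus V p) (negvars a))"

definition A7 :: "'v lossfun \<Rightarrow> bool" where
  "A7 L \<longleftrightarrow> (\<forall>V p a \<pi>. valid V p a \<and> \<pi> permutes V \<longrightarrow>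
      L V p a = L V (p \<circ> inv \<pi>) (map_form \<pi> a))"

definition A8 :: "'v lossfun \<Rightarrow> bool" where
  "A8 L \<longleftrightarrow> (\<exists>K::real. K > 0 \<and> (\<forall>V p a b. valid V p a \<and> valid V p b \<and>
      \<not> satisfiable (Conj a b) \<longrightarrow>
      expo K (L V p (Disj a b)) = expo K (L V p a) + expo K (L V p b)))"

definition loss_axioms :: "'v lossfun \<Rightarrow> bool" where
  "loss_axioms L \<longleftrightarrow> is_loss L \<and> A1 L \<and> A2 L \<and> A3 L \<and> A4 L \<and> A5 L \<and> A6 L \<and> A7 L \<and> A8 L"

definition semantic_loss :: "real \<Rightarrow> 'v lossfun" where
  "semantic_loss c V p a = ereal c * neglog
     (\<Sum>S \<in> {S. S \<subseteq> V \<and> eval (\<lambda>i. i \<in> S) a}.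
        (\<Prod>i\<in>S. p i) * (\<Prod>i\<in>V - S. 1 - p i))"

end

theory Submission imports Defs begin

text \<open>The semantic loss is \<open>-c log\<close> of the weighted model count \<open>wmc V p \<alpha>\<close>, the probability
  of \<open>\<alpha>\<close> under independent variables with marginals \<open>p\<close>. Each axiom is then an elementary
  property of \<open>wmc\<close>: multiplicativity on disjoint variables (A2), additivity on disjoint
  models (A8), monotonicity (A3), invariance under complementing or renaming variables (A6, A7).

  Conversely, let \<open>L\<close> satisfy the axioms with the base \<open>K\<close> of (A8). Applying (A6) at \<open>p = 1/2\<close>
  makes the two constants of (A5) equal, and (A8) applied to \<open>X \<or> \<not>X \<equiv> true\<close> at \<open>p = 1/2\<close> forces
  this common constant to be \<open>1 / ln K\<close>, positive by (A3). Thus \<open>K powr (-L)\<close> is the identity on literals.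
  Splitting a sentence into its Shannon cofactors \<open>(X \<and> \<alpha>[X:=1]) \<or> (\<not>X \<and> \<alpha>[X:=0])\<close> and
  applying (A8), (A2) and induction on the variables shows \<open>K powr (-L) = wmc\<close> everywhere, which
  determines \<open>L\<close>.\<close>

fun cofactor :: "'v \<Rightarrow> bool \<Rightarrow> 'v form \<Rightarrow> 'v form" where
  "cofactor v c (Var u) = (if u = v then (if c then TT else FF) else Var u)"
| "cofactor v c TT = TT"
| "cofactor v c FF = FF"
| "cofactor v c (Neg a) = Neg (cofactor v c a)"
| "cofactor v c (Conj a b) = Conj (cofactor v c a) (cofactor v c b)"
| "cofactor v c (Disj a b) = Disj (cofactor v c a) (cofactor v c b)"
| "cofactor v c (Imp a b) = Imp (cofactor v c a) (cofactor v c b)"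

lemma eval_cofactor: "eval s (cofactor v c a) = eval (s(v := c)) a"
  by (induction a) auto

lemma set_form_cofactor: "set_form (cofactor v c a) \<subseteq> set_form a - {v}"
  by (induction a) auto

lemma eval_cong: "(\<And>x. x \<in> set_form a \<Longrightarrow> s x = t x) \<Longrightarrow> eval s a = eval t a"
  by (induction a) auto

lemma eval_shannon:
  "eval s a = eval s (Disj (Conj (Var v) (cofactor v True a)) (Conj (Neg (Var v)) (cofactor v False a)))"
proof -
  have "s(v := s v) = s" by simp
  then show ?thesis by (cases "s v") (simp_all add: eval_cofactor)
qed

lemma eval_negvars: "eval s (negvars a) = eval (\<lambda>i. \<not> s i) a"
  by (induction a) auto

lemma eval_map_form: "eval s (map_form f a) = eval (s \<circ> f) a"
  by (induction a) auto

lemma eval_foldr_lit: "eval s (foldr Conj (map (lit S) xs) TT) \<longleftrightarrow> (\<forall>v\<in>set xs. s v = (v \<in> S))"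
  by (induction xs) (auto simp: lit_def)

lemma eval_state_form:
  assumes "finite V"
  shows "eval s (state_form V S) \<longleftrightarrow> (\<forall>v\<in>V. s v = (v \<in> S))"
proof -
  have "\<exists>xs. set xs = V \<and> distinct xs" using assms by (rule finite_distinct_list)
  then have "set (SOME xs. set xs = V \<and> distinct xs) = V" by (rule someI2_ex) auto
  then show ?thesis unfolding state_form_def eval_foldr_lit by simp
qed

section \<open>Weighted model counting\<close>

definition state_weight :: "'v set \<Rightarrow> ('v \<Rightarrow> real) \<Rightarrow> 'v set \<Rightarrow> real" where
  "state_weight V p S = (\<Prod>i\<in>V. if i \<in> S then p i else 1 - p i)"

definition wmc :: "'v set \<Rightarrow> ('v \<Rightarrow> real) \<Rightarrow> 'v form \<Rightarrow> real" where
  "wmc V p a = (\<Sum>S\<in>Pow V. if eval (\<lambda>i. i \<in> S) a then state_weight V p S else 0)"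

lemma state_weight_nonneg: "p \<in> pvecs V \<Longrightarrow> state_weight V p S \<ge> 0"
  unfolding state_weight_def pvecs_def by (intro prod_nonneg) (auto simp: PiE_iff)

lemma state_weight_cong: "(\<And>i. i \<in> V \<Longrightarrow> p i = q i) \<Longrightarrow> state_weight V p S = state_weight V q S"
  unfolding state_weight_def by (rule prod.cong) auto

lemma state_weight_split:
  assumes "finite V" "S \<subseteq> V"
  shows "state_weight V p S = (\<Prod>i\<in>S. p i) * (\<Prod>i\<in>V - S. 1 - p i)"
proof -
  have "V \<inter> {i. i \<in> S} = S" "V \<inter> - {i. i \<in> S} = V - S" using assms(2) by auto
  with prod.If_cases[OF assms(1), of "\<lambda>i. i \<in> S" p "\<lambda>i. 1 - p i"] show ?thesis
    by (simp add: state_weight_def)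
qed

lemma semantic_loss_wmc:
  assumes "finite V"
  shows "semantic_loss c V p a = ereal c * neglog (wmc V p a)"
proof -
  have models: "{S. S \<subseteq> V \<and> eval (\<lambda>i. i \<in> S) a} = {S \<in> Pow V. eval (\<lambda>i. i \<in> S) a}" by auto
  have "(\<Sum>S | S \<subseteq> V \<and> eval (\<lambda>i. i \<in> S) a. (\<Prod>i\<in>S. p i) * (\<Prod>i\<in>V - S. 1 - p i))
      = (\<Sum>S \<in> Pow V. if eval (\<lambda>i. i \<in> S) a then (\<Prod>i\<in>S. p i) * (\<Prod>i\<in>V - S. 1 - p i) else 0)"
    unfolding models by (rule sum.inter_filter) (simp add: assms)
  also have "\<dots> = wmc V p a"
    unfolding wmc_def by (rule sum.cong) (use assms in \<open>auto simp: state_weight_split\<close>)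
  finally show ?thesis unfolding semantic_loss_def by simp
qed

lemma wmc_nonneg: "p \<in> pvecs V \<Longrightarrow> wmc V p a \<ge> 0"
  unfolding wmc_def by (intro sum_nonneg) (simp add: state_weight_nonneg)

lemma wmc_cong:
  assumes "\<And>i. i \<in> V \<Longrightarrow> p i = q i"
  shows "wmc V p a = wmc V q a"
  unfolding wmc_def by (intro sum.cong refl) (simp add: state_weight_cong[of V p q, OF assms])

lemma wmc_empty: "wmc {} p a = (if eval (\<lambda>i. False) a then 1 else 0)"
  by (simp add: wmc_def state_weight_def)

lemma wmc_shannon:
  assumes "finite V" "v \<notin> V"
  shows "wmc (insert v V) p a = p v * wmc V p (cofactor v True a) + (1 - p v) * wmc V p (cofactor v False a)"
proof -
  let ?f = "\<lambda>S. if eval (\<lambda>i. i \<in> S) a then state_weight (insert v V) p S else 0"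
  have inj: "inj_on (insert v) (Pow V)"
    using assms(2) by (intro inj_onI) (metis PowD insert_ident subsetD)
  have split: "sum ?f (Pow (insert v V)) = sum ?f (Pow V) + sum (?f \<circ> insert v) (Pow V)"
  proof -
    have "Pow V \<inter> insert v ` Pow V = {}" using assms(2) by auto
    then show ?thesis unfolding Pow_insert using assms inj by (simp add: sum.union_disjoint sum.reindex)
  qed
  have without_v: "?f S = (1 - p v) * (if eval (\<lambda>i. i \<in> S) (cofactor v False a) then state_weight V p S else 0)"
    if "S \<in> Pow V" for S
  proof -
    have "v \<notin> S" using that assms(2) by auto
    then have "(\<lambda>i. i \<in> S)(v := False) = (\<lambda>i. i \<in> S)" by (auto simp: fun_eq_iff)
    then show ?thesis using assms \<open>v \<notin> S\<close> by (simp add: eval_cofactor state_weight_def)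
  qed
  have with_v: "(?f \<circ> insert v) S = p v * (if eval (\<lambda>i. i \<in> S) (cofactor v True a) then state_weight V p S else 0)"
    if "S \<in> Pow V" for S
  proof -
    have "(\<lambda>i. i \<in> S)(v := True) = (\<lambda>i. i \<in> insert v S)" by (auto simp: fun_eq_iff)
    moreover have "state_weight V p (insert v S) = state_weight V p S"
      unfolding state_weight_def by (rule prod.cong) (use assms in auto)
    ultimately show ?thesis using assms by (simp add: eval_cofactor state_weight_def)
  qed
  have "sum ?f (Pow V) = (\<Sum>S\<in>Pow V. (1 - p v) *
      (if eval (\<lambda>i. i \<in> S) (cofactor v False a) then state_weight V p S else 0))"
    "sum (?f \<circ> insert v) (Pow V) = (\<Sum>S\<in>Pow V. p v *
      (if eval (\<lambda>i. i \<in> S) (cofactor v True a) then state_weight V p S else 0))"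
    using without_v with_v by (auto intro: sum.cong)
  then show ?thesis
    unfolding wmc_def split by (simp only: sum_distrib_left[symmetric] add.commute)
qed

lemma wmc_TT: "finite V \<Longrightarrow> wmc V p TT = 1"
  by (induction V rule: finite_induct) (simp_all add: wmc_empty wmc_shannon)

lemma wmc_Var: "wmc {v} p (Var v) = p v"
  using wmc_shannon[of "{}" v p "Var v"] by (simp add: wmc_empty)

lemma wmc_Neg_Var: "wmc {v} p (Neg (Var v)) = 1 - p v"
  using wmc_shannon[of "{}" v p "Neg (Var v)"] by (simp add: wmc_empty)

lemma wmc_Disj:
  assumes "\<not> satisfiable (Conj a b)"
  shows "wmc V p (Disj a b) = wmc V p a + wmc V p b"
  unfolding wmc_def sum.distrib[symmetric]
  by (rule sum.cong) (use assms in \<open>auto simp: satisfiable_def\<close>)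

lemma wmc_mono:
  assumes "p \<in> pvecs V" "entails a b"
  shows "wmc V p a \<le> wmc V p b"
  unfolding wmc_def
  by (rule sum_mono) (use assms in \<open>auto simp: entails_def state_weight_nonneg\<close>)

lemma wmc_state_form:
  assumes "finite V" "S \<subseteq> V"
  shows "wmc V (state_vec V S) (state_form V S) = 1"
proof -
  have "state_weight V (state_vec V S) S = 1"
    unfolding state_weight_def by (rule prod.neutral) (auto simp: state_vec_def)
  moreover have "eval (\<lambda>i. i \<in> T) (state_form V S) \<longleftrightarrow> T = S" if "T \<in> Pow V" for T
    using that assms by (auto simp: eval_state_form)
  ultimately have "wmc V (state_vec V S) (state_form V S) = (\<Sum>T\<in>Pow V. if T = S then 1 else 0)"
    unfolding wmc_def by (intro sum.cong) auto
  then show ?thesis using assms by simp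
qed

lemma state_weight_one_minus:
  "T \<subseteq> V \<Longrightarrow> state_weight V (one_minus V p) T = state_weight V p (V - T)"
  unfolding state_weight_def by (rule prod.cong) (auto simp: one_minus_def)

lemma wmc_negvars:
  assumes "set_form a \<subseteq> V"
  shows "wmc V (one_minus V p) (negvars a) = wmc V p a"
  unfolding wmc_def
proof (rule sum.reindex_bij_witness[where i = "\<lambda>T. V - T" and j = "\<lambda>T. V - T"])
  fix T assume T: "T \<in> Pow V"
  then show "V - (V - T) = T" "V - T \<in> Pow V" by auto
  have "eval (\<lambda>i. i \<in> T) (negvars a) = eval (\<lambda>i. i \<in> V - T) a"
    unfolding eval_negvars by (rule eval_cong) (use assms in auto)
  then show "(if eval (\<lambda>i. i \<in> V - T) a then state_weight V p (V - T) else 0) =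
        (if eval (\<lambda>i. i \<in> T) (negvars a) then state_weight V (one_minus V p) T else 0)"
    using T by (simp add: state_weight_one_minus)
qed auto

lemma state_weight_permute:
  assumes "finite V" "\<pi> permutes V"
  shows "state_weight V (p \<circ> inv \<pi>) S = state_weight V p (inv \<pi> ` S)"
proof -
  have mem: "x \<in> inv \<pi> ` S \<longleftrightarrow> \<pi> x \<in> S" for x
    by (metis image_iff permutes_inverses(1,2)[OF assms(2)])
  show ?thesis
    unfolding state_weight_def o_def
    by (subst prod.permute[OF permutes_inv[OF assms(2)]]) (simp add: mem permutes_inverses[OF assms(2)])
qed

lemma wmc_map_form:
  assumes "finite V" "\<pi> permutes V"
  shows "wmc V (p \<circ> inv \<pi>) (map_form \<pi> a) = wmc V p a"
  unfolding wmc_def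
proof (rule sum.reindex_bij_witness[where i = "\<lambda>T. \<pi> ` T" and j = "\<lambda>T. inv \<pi> ` T"])
  note inv = permutes_inverses[OF assms(2)]
  fix S assume S: "S \<in> Pow V"
  show "\<pi> ` inv \<pi> ` S = S" by (simp add: image_image inv)
  show "inv \<pi> ` S \<in> Pow V" using S permutes_in_image[OF permutes_inv[OF assms(2)]] by auto
  have "x \<in> inv \<pi> ` S \<longleftrightarrow> \<pi> x \<in> S" for x by (metis image_iff inv)
  then have "eval (\<lambda>i. i \<in> S) (map_form \<pi> a) = eval (\<lambda>i. i \<in> inv \<pi> ` S) a"
    unfolding eval_map_form by (simp add: o_def)
  then show "(if eval (\<lambda>i. i \<in> inv \<pi> ` S) a then state_weight V p (inv \<pi> ` S) else 0) =
        (if eval (\<lambda>i. i \<in> S) (map_form \<pi> a) then state_weight V (p \<circ> inv \<pi>) S else 0)"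
    by (simp add: state_weight_permute[OF assms])
next
  fix T assume "T \<in> Pow V"
  then show "inv \<pi> ` \<pi> ` T = T" "\<pi> ` T \<in> Pow V"
    using permutes_in_image[OF assms(2)] by (auto simp: image_image permutes_inverses[OF assms(2)])
qed

lemma state_weight_concat_vec:
  assumes "finite X" "finite Y" "X \<inter> Y = {}" "A \<subseteq> X" "B \<subseteq> Y"
  shows "state_weight (X \<union> Y) (concat_vec X p q) (A \<union> B) = state_weight X p A * state_weight Y q B"
proof -
  have "state_weight X (concat_vec X p q) (A \<union> B) = state_weight X p A"
    "state_weight Y (concat_vec X p q) (A \<union> B) = state_weight Y q B"
    unfolding state_weight_def by (intro prod.cong; use assms in \<open>auto simp: concat_vec_def\<close>)+
  moreover have "state_weight (X \<union> Y) r S = state_weight X r S * state_weight Y r S" for r S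
    using assms by (simp add: state_weight_def prod.union_disjoint)
  ultimately show ?thesis by simp
qed

lemma wmc_Conj:
  assumes "finite X" "finite Y" "X \<inter> Y = {}" "set_form a \<subseteq> X" "set_form b \<subseteq> Y"
  shows "wmc (X \<union> Y) (concat_vec X p q) (Conj a b) = wmc X p a * wmc Y q b"
proof -
  let ?union = "\<lambda>(A, B). A \<union> B"
  define h where "h S = (if eval (\<lambda>i. i \<in> S) (Conj a b)
    then state_weight (X \<union> Y) (concat_vec X p q) S else 0)" for S
  define f where "f A = (if eval (\<lambda>i. i \<in> A) a then state_weight X p A else 0)" for A
  define g where "g B = (if eval (\<lambda>i. i \<in> B) b then state_weight Y q B else 0)" for B
  have Pow_union: "Pow (X \<union> Y) = ?union ` (Pow X \<times> Pow Y)"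
  proof
    show "Pow (X \<union> Y) \<subseteq> ?union ` (Pow X \<times> Pow Y)"
    proof
      fix S assume "S \<in> Pow (X \<union> Y)"
      then have "S = ?union (S \<inter> X, S \<inter> Y)" by auto
      then show "S \<in> ?union ` (Pow X \<times> Pow Y)" by blast
    qed
  qed auto
  have inj: "inj_on ?union (Pow X \<times> Pow Y)"
    using assms(3) by (intro inj_onI) (auto, blast+)
  have summand: "h (A \<union> B) = f A * g B"
    if "A \<subseteq> X" "B \<subseteq> Y" for A B
  proof -
    have "eval (\<lambda>i. i \<in> A \<union> B) a = eval (\<lambda>i. i \<in> A) a"
      "eval (\<lambda>i. i \<in> A \<union> B) b = eval (\<lambda>i. i \<in> B) b"
      by (rule eval_cong; use that assms in auto)+
    then show ?thesis
      using state_weight_concat_vec[OF assms(1-3) that] by (simp add: h_def f_def g_def)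
  qed
  have "wmc (X \<union> Y) (concat_vec X p q) (Conj a b) = (\<Sum>(A, B)\<in>Pow X \<times> Pow Y. f A * g B)"
    unfolding wmc_def h_def[symmetric] Pow_union sum.reindex[OF inj]
    by (rule sum.cong) (auto simp: summand)
  also have "\<dots> = sum f (Pow X) * sum g (Pow Y)"
    by (simp add: sum_product sum.cartesian_product)
  finally show ?thesis unfolding wmc_def f_def g_def .
qed

lemma neglog_1 [simp]: "neglog 1 = 0"
  by (simp add: neglog_def zero_ereal_def)

lemma neglog_half: "neglog (1/2) = ereal (ln 2)"
  by (simp add: neglog_def ln_div)

lemma neglog_mult:
  assumes "c > 0" "x \<ge> 0" "y \<ge> 0"
  shows "ereal c * neglog (x * y) = ereal c * neglog x + ereal c * neglog y"
  using assms by (cases "x = 0 \<or> y = 0") (auto simp: neglog_def ln_mult algebra_simps)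

lemma neglog_antimono: "0 \<le> x \<Longrightarrow> x \<le> y \<Longrightarrow> neglog y \<le> neglog x"
  by (cases "x = 0") (auto simp: neglog_def)

lemma expo_0: "K > 0 \<Longrightarrow> expo K 0 = 1"
  by (simp add: expo_def)

lemma expo_add:
  assumes "K > 0" "x \<noteq> -\<infinity>" "y \<noteq> -\<infinity>"
  shows "expo K (x + y) = expo K x * expo K y"
  using assms by (cases x; cases y) (auto simp: expo_def simp flip: powr_add)

lemma expo_neglog:
  assumes "c > 0" "x \<ge> 0"
  shows "expo (exp (1 / c)) (ereal c * neglog x) = x"
proof (cases "x = 0")
  case False
  then have "x > 0" using assms(2) by simp
  then have "expo (exp (1 / c)) (ereal c * neglog x) = exp (ln x)"
    using assms(1) by (simp add: neglog_def expo_def powr_def)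
  then show ?thesis using \<open>x > 0\<close> by simp
qed (use assms in \<open>simp add: neglog_def expo_def\<close>)

lemma expo_eq_imp_neglog:
  assumes "c > 0" "l \<noteq> -\<infinity>" "x \<ge> 0" and expo: "expo (exp (1 / c)) l = x"
  shows "l = ereal c * neglog x"
proof (cases l)
  case (real y)
  then have "exp (- y / c) = x" using expo by (simp add: expo_def powr_def)
  then have "x > 0" "y = c * - ln x" using assms(1) by (auto simp: field_simps)
  then show ?thesis using real by (simp add: neglog_def)
qed (use assms in \<open>auto simp: expo_def neglog_def\<close>)

section \<open>The semantic loss satisfies the axioms\<close>

lemma single_vec_pvecs: "x \<in> {0..1} \<Longrightarrow> single_vec v x \<in> pvecs {v}"
  by (simp add: single_vec_def pvecs_def)

lemma semantic_loss_axioms: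
  assumes c: "c > 0"
  shows "loss_axioms (semantic_loss c :: 'v lossfun)"
  unfolding loss_axioms_def
proof (intro conjI)
  show "is_loss (semantic_loss c)"
    unfolding is_loss_def valid_def using c by (auto simp: semantic_loss_wmc neglog_def)
  show "A1 (semantic_loss c)"
    unfolding A1_def by (simp add: semantic_loss_wmc wmc_TT)
  show "A2 (semantic_loss c)"
    unfolding A2_def valid_def by (auto simp: semantic_loss_wmc wmc_Conj neglog_mult c wmc_nonneg)
  show "A3 (semantic_loss c)"
    unfolding A3_def valid_def using c
    by (auto simp: semantic_loss_wmc intro!: ereal_mult_left_mono neglog_antimono wmc_mono wmc_nonneg)
  show "A4 (semantic_loss c)"
    unfolding A4_def by (simp add: semantic_loss_wmc wmc_state_form)
  show "A5 (semantic_loss c)"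
    unfolding A5_def by (auto simp: semantic_loss_wmc wmc_Var wmc_Neg_Var single_vec_def)
  show "A6 (semantic_loss c)"
    unfolding A6_def valid_def by (simp add: semantic_loss_wmc wmc_negvars)
  show "A7 (semantic_loss c)"
    unfolding A7_def valid_def by (simp add: semantic_loss_wmc wmc_map_form)
  show "A8 (semantic_loss c)"
    unfolding A8_def valid_def
    by (rule exI[of _ "exp (1/c)"]) (auto simp: semantic_loss_wmc wmc_Disj expo_neglog c wmc_nonneg)
qed

section \<open>Uniqueness\<close>

context
  fixes L :: "'v lossfun" and K :: real
  assumes axioms: "loss_axioms L" and K_pos: "K > 0"
    and expo_Disj: "\<And>V p a b. valid V p a \<Longrightarrow> valid V p b \<Longrightarrow> \<not> satisfiable (Conj a b) \<Longrightarrow>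
      expo K (L V p (Disj a b)) = expo K (L V p a) + expo K (L V p b)"
begin

lemma loss_neq_minf: "valid V p a \<Longrightarrow> L V p a \<noteq> -\<infinity>"
  using axioms unfolding loss_axioms_def is_loss_def by blast

lemma loss_TT: "finite V \<Longrightarrow> p \<in> pvecs V \<Longrightarrow> L V p TT = 0"
  using axioms unfolding loss_axioms_def A1_def by blast

lemma loss_equiv:
  assumes "valid V p a" "valid V p b" "\<And>s. eval s a = eval s b"
  shows "L V p a = L V p b"
  using axioms assms unfolding loss_axioms_def A3_def entails_def by (metis order_antisym)

lemma expo_loss_unsat:
  assumes "valid V p a" "\<And>s. \<not> eval s a"
  shows "expo K (L V p a) = 0"
proof -
  have "expo K (L V p (Disj a a)) = expo K (L V p a) + expo K (L V p a)"
    using assms by (intro expo_Disj) (auto simp: satisfiable_def)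
  moreover have "L V p (Disj a a) = L V p a"
    using assms by (intro loss_equiv) (auto simp: valid_def)
  ultimately show ?thesis by simp
qed

lemma literal_loss_common_coeff:
  "\<exists>k. \<forall>x\<in>{0..1}. L {v} (single_vec v x) (Var v) = ereal k * neglog x
      \<and> L {v} (single_vec v x) (Neg (Var v)) = ereal k * neglog (1 - x)"
proof -
  obtain k k' where kk: "\<forall>x \<in> {0..1}. L {v} (single_vec v x) (Var v) = ereal k * neglog x \<and>
      L {v} (single_vec v x) (Neg (Var v)) = ereal k' * neglog (1 - x)"
    using axioms unfolding loss_axioms_def A5_def by blast
  have "one_minus {v} (single_vec v (1/2)) = single_vec v (1/2)"
    by (auto simp: one_minus_def single_vec_def)
  moreover have "valid {v} (single_vec v (1/2)) (Var v)"
    by (simp add: valid_def single_vec_pvecs)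
  ultimately have "L {v} (single_vec v (1/2)) (Var v) = L {v} (single_vec v (1/2)) (Neg (Var v))"
    using axioms unfolding loss_axioms_def A6_def by force
  then have "ereal k * ereal (ln 2) = ereal k' * ereal (ln 2)"
    using kk by (simp add: neglog_half)
  then have "k = k'" by simp
  then show ?thesis using kk by blast
qed

lemma literal_loss_coeff:
  assumes k: "\<forall>x\<in>{0..1}. L {v} (single_vec v x) (Var v) = ereal k * neglog x
      \<and> L {v} (single_vec v x) (Neg (Var v)) = ereal k * neglog (1 - x)"
  shows "k > 0" "k * ln K = 1"
proof -
  let ?h = "single_vec v (1/2)"
  have valid: "valid {v} ?h a" if "set_form a \<subseteq> {v}" for a
    using that by (simp add: valid_def single_vec_pvecs)
  have L_half: "L {v} ?h (Var v) = ereal (k * ln 2)" "L {v} ?h (Neg (Var v)) = ereal (k * ln 2)"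
    using k by (simp_all add: neglog_half)
  have "L {v} ?h (Var v) \<ge> L {v} ?h TT"
    using axioms valid[of "Var v"] valid[of TT] unfolding loss_axioms_def A3_def entails_def by simp
  then have "k * ln 2 \<ge> 0" using L_half loss_TT[of "{v}" ?h] by (simp add: single_vec_pvecs)
  then have k_nonneg: "k \<ge> 0" by (simp add: zero_le_mult_iff)
  have "L {v} ?h (Disj (Var v) (Neg (Var v))) = L {v} ?h TT"
    by (rule loss_equiv) (simp_all add: valid)
  then have "1 = expo K (L {v} ?h (Var v)) + expo K (L {v} ?h (Neg (Var v)))"
    using expo_Disj[OF valid valid, of "Var v" "Neg (Var v)"] loss_TT[of "{v}" ?h]
    by (simp add: satisfiable_def single_vec_pvecs expo_0[OF K_pos])
  then have "K powr (- (k * ln 2)) = 1/2" by (simp add: L_half expo_def)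
  then have "ln (K powr (- (k * ln 2))) = ln (1/2)" by (rule arg_cong)
  then have "- (k * ln 2) * ln K = - ln 2" using K_pos by (simp add: ln_div)
  then show "k * ln K = 1" by simp
  then show "k > 0" using k_nonneg by (cases "k = 0") auto
qed

lemma ln_K_pos: "ln K > 0"
proof -
  obtain k where "k > 0" "k * ln K = 1"
    using literal_loss_common_coeff literal_loss_coeff by blast
  then show ?thesis by (metis zero_less_mult_pos zero_less_one)
qed

lemma K_eq_exp: "K = exp (1 / (1 / ln K))"
  using K_pos by simp

lemma expo_loss_literal:
  assumes "x \<in> {0..1}"
  shows "expo K (L {v} (single_vec v x) (Var v)) = x"
    and "expo K (L {v} (single_vec v x) (Neg (Var v))) = 1 - x"
proof -
  obtain k where k: "\<forall>x\<in>{0..1}. L {v} (single_vec v x) (Var v) = ereal k * neglog x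
      \<and> L {v} (single_vec v x) (Neg (Var v)) = ereal k * neglog (1 - x)"
    using literal_loss_common_coeff by blast
  have "k = 1 / ln K" using literal_loss_coeff[OF k] ln_K_pos by (simp add: field_simps)
  then show "expo K (L {v} (single_vec v x) (Var v)) = x"
    and "expo K (L {v} (single_vec v x) (Neg (Var v))) = 1 - x"
    using k assms ln_K_pos expo_neglog[of "1 / ln K"] by (subst K_eq_exp; simp)+
qed

lemma expo_loss_literal_Conj:
  assumes "v \<notin> V" "valid (insert v V) p (Conj l b)" "set_form b \<subseteq> V"
    and lit: "\<And>x. x \<in> {0..1} \<Longrightarrow> expo K (L {v} (single_vec v x) l) = f x"
    and "set_form l \<subseteq> {v}"
  shows "expo K (L (insert v V) p (Conj l b)) = f (p v) * expo K (L V (restrict p V) b)"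
proof -
  have p: "p \<in> pvecs (insert v V)" "finite V" using assms(2) by (auto simp: valid_def)
  then have pv: "p v \<in> {0..1}" unfolding pvecs_def by auto
  have valid_l: "valid {v} (single_vec v (p v)) l"
    using assms(5) pv by (simp add: valid_def single_vec_pvecs)
  have valid_b: "valid V (restrict p V) b"
    using p assms(3) by (auto simp: valid_def pvecs_def)
  have "concat_vec {v} (single_vec v (p v)) (restrict p V) = p"
    using p(1) by (auto simp: fun_eq_iff concat_vec_def single_vec_def pvecs_def PiE_def extensional_def)
  then have "L (insert v V) p (Conj l b) = L {v} (single_vec v (p v)) l + L V (restrict p V) b"
    using axioms valid_l valid_b assms(1) unfolding loss_axioms_def A2_def by force
  then show ?thesis
    using expo_add[OF K_pos loss_neq_minf[OF valid_l] loss_neq_minf[OF valid_b]] lit[OF pv] by simp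
qed

lemma expo_loss_eq_wmc:
  assumes "valid V p a"
  shows "expo K (L V p a) = wmc V p a"
proof -
  have "finite V" using assms by (simp add: valid_def)
  then show ?thesis
    using assms
  proof (induction V arbitrary: p a rule: finite_induct)
    case empty
    have eval_const: "eval s a = eval (\<lambda>i. False) a" for s
      by (rule eval_cong) (use empty in \<open>auto simp: valid_def\<close>)
    show ?case
    proof (cases "eval (\<lambda>i. False) a")
      case True
      then have "L {} p a = L {} p TT"
        using empty eval_const by (intro loss_equiv) (auto simp: valid_def)
      then show ?thesis
        using True empty loss_TT[of "{}" p] by (simp add: valid_def wmc_empty expo_0[OF K_pos])
    next
      case False
      then show ?thesis using empty eval_const expo_loss_unsat by (simp add: wmc_empty)
    qed
  next
    case (insert v V)
    define a1 where "a1 = cofactor v True a"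
    define a0 where "a0 = cofactor v False a"
    have sets: "set_form a1 \<subseteq> V" "set_form a0 \<subseteq> V"
      using set_form_cofactor[of v _ a] insert.prems unfolding a1_def a0_def valid_def by auto
    have valid1: "valid (insert v V) p (Conj (Var v) a1)"
      and valid0: "valid (insert v V) p (Conj (Neg (Var v)) a0)"
      using insert.prems sets by (auto simp: valid_def)
    have "L (insert v V) p a = L (insert v V) p (Disj (Conj (Var v) a1) (Conj (Neg (Var v)) a0))"
      using insert.prems valid1 valid0 eval_shannon[of _ a v]
      by (intro loss_equiv) (auto simp: valid_def a1_def a0_def)
    then have "expo K (L (insert v V) p a) =
        expo K (L (insert v V) p (Conj (Var v) a1)) + expo K (L (insert v V) p (Conj (Neg (Var v)) a0))"
      using expo_Disj[OF valid1 valid0] by (simp add: satisfiable_def)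
    also have "\<dots> = p v * wmc V p a1 + (1 - p v) * wmc V p a0"
    proof -
      have valid_restrict: "valid V (restrict p V) b" if "set_form b \<subseteq> V" for b
        using insert.prems that insert.hyps(1) by (auto simp: valid_def pvecs_def)
      have "wmc V (restrict p V) b = wmc V p b" for b by (rule wmc_cong) simp
      then have "expo K (L V (restrict p V) b) = wmc V p b" if "set_form b \<subseteq> V" for b
        using insert.IH[OF valid_restrict[OF that]] by (simp add: restrict_def)
      then show ?thesis
        using expo_loss_literal_Conj[OF insert.hyps(2) valid1 sets(1) expo_loss_literal(1)]
          expo_loss_literal_Conj[OF insert.hyps(2) valid0 sets(2) expo_loss_literal(2)] sets
        by simp
    qed
    finally show ?case using wmc_shannon[OF insert.hyps] by (simp add: a1_def a0_def)
  qed
qed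

lemma loss_eq_semantic_loss:
  assumes "valid V p a"
  shows "L V p a = semantic_loss (1 / ln K) V p a"
proof -
  have "L V p a = ereal (1 / ln K) * neglog (wmc V p a)"
    using assms ln_K_pos expo_loss_eq_wmc[OF assms] loss_neq_minf[OF assms]
    by (intro expo_eq_imp_neglog) (use K_pos in \<open>auto simp: valid_def wmc_nonneg\<close>)
  then show ?thesis using assms by (simp add: valid_def semantic_loss_wmc)
qed

end

theorem theorem1:
  shows "(\<forall>c::real. c > 0 \<longrightarrow> loss_axioms (semantic_loss c :: 'v lossfun)) \<and>
         (\<forall>L :: 'v lossfun. loss_axioms L \<longrightarrow>
            (\<exists>c::real. c > 0 \<and> (\<forall>V p a. valid V p a \<longrightarrow> L V p a = semantic_loss c V p a)))"
proof (intro conjI allI impI)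
  show "loss_axioms (semantic_loss c :: 'v lossfun)" if "c > 0" for c
    using that by (rule semantic_loss_axioms)
next
  fix L :: "'v lossfun"
  assume axioms: "loss_axioms L"
  then obtain K where K: "K > 0" and "\<forall>V p a b. valid V p a \<and> valid V p b \<and> \<not> satisfiable (Conj a b) \<longrightarrow>
      expo K (L V p (Disj a b)) = expo K (L V p a) + expo K (L V p b)"
    unfolding loss_axioms_def A8_def by blast
  then have expo_Disj: "\<And>V p a b. valid V p a \<Longrightarrow> valid V p b \<Longrightarrow> \<not> satisfiable (Conj a b) \<Longrightarrow>
      expo K (L V p (Disj a b)) = expo K (L V p a) + expo K (L V p b)"
    by blast
  have "ln K > 0"
    by (rule ln_K_pos[OF axioms K]) (fact expo_Disj)
  moreover have "L V p a = semantic_loss (1 / ln K) V p a" if "valid V p a" for V p a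
    by (rule loss_eq_semantic_loss[OF axioms K _ that]) (fact expo_Disj)
  ultimately show "\<exists>c>0. \<forall>V p a. valid V p a \<longrightarrow> L V p a = semantic_loss c V p a"
    by (intro exI[of _ "1 / ln K"]) simp
qed

end
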